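(* Let $\varphi$ be a normal form $\mathrm{GF}^2{+}\mathrm{EG}$ sentence whose equivalence symbols are $E_1,\dots,E_k$, let $\bar\Theta=(\Theta^{E_1},\dots,\Theta^{E_k})$ be a tuple of sets of $M_\varphi$-counting types, let $\theta\in\Theta^{E_i}$ for some $i$, and let $\Gamma_{\bar\Theta}(\theta)$ be the system of linear (in)equalities defined in the context. The following are equivalent: (i) $\Gamma_{\bar\Theta}(\theta)$ has a non-negative integer solution; (ii) $\Gamma_{\bar\Theta}(\theta)$ has a non-negative rational solution; (iii) $\Gamma_{\bar\Theta}(\theta)$ has a non-negative integer solution in which at most $m$ unknowns are non-zero and all values are bounded by $m(m\cdot M_\varphi)^{2m+1}$, where $m$ is the number of (in)equalities in $\Gamma_{\bar\Theta}(\theta)$.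
   Context: $\mathrm{GF}^2{+}\mathrm{EG}$ is the two-variable guarded fragment in which the distinguished binary symbols $E_1,\dots,E_k$ occur only in guards and are interpreted as equivalences; $\varphi$ is in normal form (a conjunction of conjuncts of quantifier depth at most two of the usual Scott-type shapes). $\mathcal{A}_\varphi$ is the set of atomic 1-types over the signature of $\varphi$ (maximal consistent sets of atoms and negated atoms in the variable $x$), $|\varphi|$ is the length of $\varphi$, and $M_\varphi=3|\mathcal{A}_\varphi||\varphi|^3$. An $M_\varphi$-counting type is a function $\theta:\mathcal{A}_\varphi\to\{0,1,\dots,M_\varphi\}$; a 1-type $\alpha$ appears in it if $\theta(\alpha)>0$. $\alpha$ appears in $\Theta^{E_i}$ if it appears in some element of $\Theta^{E_i}$; $\mathcal{A}_{\bar\Theta}$ is the set of 1-types appearing in some $\Theta^{E_i}$. $\alpha$ is royal for $E_i$-classes if $\alpha$ appears in $\Theta^{E_i}$ and $\theta'(\alpha)<M_\varphi$ for every $\theta'\in\Theta^{E_i}$. The system $\Gamma_{\bar\Theta}(\theta)$ has unknowns $X^{E_j}_{\theta'}$ for $1\le j\le k$, $\theta'\in\Theta^{E_j}$, and $Y^{E_j}_\alpha$ for $1\le j\le k$, $\alpha\in\mathcal{A}_{\bar\Theta}$. For every $\alpha\in\mathcal{A}_{\bar\Theta}$ and every $j$ it contains: (E0) $Y^{E_j}_\alpha=\sum_{\theta'\in\Theta^{E_j}}\theta'(\alpha)X^{E_j}_{\theta'}$; (E1a) if $\alpha$ is royal for $E_j$-classes, $Y^{E_j}_\alpha\ge1$;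 (E1b) if $\alpha$ is not royal for $E_j$-classes, $\sum_{\theta'\in\Theta^{E_j},\,\theta'(\alpha)=M_\varphi}X^{E_j}_{\theta'}\ge1$; (E2) if $\alpha$ is royal for $E_j$-classes, $Y^{E_j}_\alpha\ge Y^{E_l}_\alpha$ for every $l\ne j$. Additionally it contains (E3) $X^{E_i}_\theta\ge1$ for the distinguished $\theta\in\Theta^{E_i}$. *)

theory Defs
  imports Main "HOL.Rat"
begin

text \<open>Atomic 1-types are elements of an abstract type 'a; the set of atomic 1-types
  of phi is a finite set A.  An M-counting type is a function theta from A to
  {0..M}; we represent it as a function 'a => nat that is 0 outside A.
  The tuple (Theta^{E_1},...,Theta^{E_k}) is a function Theta :: nat => ('a => nat) set,
  used on the indices 1..k.\<close>

definition counting_type :: "'a set \<Rightarrow> nat \<Rightarrow> ('a \<Rightarrow> nat) \<Rightarrow> bool" where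
  "counting_type A M t \<longleftrightarrow> (\<forall>a\<in>A. t a \<le> M) \<and> (\<forall>a. a \<notin> A \<longrightarrow> t a = 0)"

definition appears_in :: "('a \<Rightarrow> nat) set \<Rightarrow> 'a \<Rightarrow> bool" where
  "appears_in S a \<longleftrightarrow> (\<exists>t\<in>S. t a > 0)"

definition types_of_tuple :: "'a set \<Rightarrow> nat \<Rightarrow> (nat \<Rightarrow> ('a \<Rightarrow> nat) set) \<Rightarrow> 'a set" where
  "types_of_tuple A k Theta = {a \<in> A. \<exists>j\<in>{1..k}. appears_in (Theta j) a}"

definition royal :: "nat \<Rightarrow> ('a \<Rightarrow> nat) set \<Rightarrow> 'a \<Rightarrow> bool" where
  "royal M S a \<longleftrightarrow> appears_in S a \<and> (\<forall>t\<in>S. t a < M)"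

datatype 'a unknown = XU nat "'a \<Rightarrow> nat" | YU nat 'a

text \<open>(In)equalities of the system, indexed: E0 j alpha, E1 j alpha (E1a or E1b),
  E2 j l alpha, E3.\<close>
datatype 'a constr = C0 nat 'a | C1 nat 'a | C2 nat nat 'a | C3

definition unknowns :: "'a set \<Rightarrow> nat \<Rightarrow> (nat \<Rightarrow> ('a \<Rightarrow> nat) set) \<Rightarrow> 'a unknown set" where
  "unknowns A k Theta =
     {XU j t | j t. j \<in> {1..k} \<and> t \<in> Theta j} \<union>
     {YU j a | j a. j \<in> {1..k} \<and> a \<in> types_of_tuple A k Theta}"

definition constrs :: "'a set \<Rightarrow> nat \<Rightarrow> nat \<Rightarrow> (nat \<Rightarrow> ('a \<Rightarrow> nat) set) \<Rightarrow> 'a constr set" where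
  "constrs A M k Theta =
     {C0 j a | j a. j \<in> {1..k} \<and> a \<in> types_of_tuple A k Theta} \<union>
     {C1 j a | j a. j \<in> {1..k} \<and> a \<in> types_of_tuple A k Theta} \<union>
     {C2 j l a | j l a. j \<in> {1..k} \<and> l \<in> {1..k} \<and> l \<noteq> j \<and>
                  a \<in> types_of_tuple A k Theta \<and> royal M (Theta j) a} \<union>
     {C3}"

fun sat_constr :: "nat \<Rightarrow> (nat \<Rightarrow> ('a \<Rightarrow> nat) set) \<Rightarrow> nat \<Rightarrow> ('a \<Rightarrow> nat)
                    \<Rightarrow> ('a unknown \<Rightarrow> 'v::linordered_idom) \<Rightarrow> 'a constr \<Rightarrow> bool" where
  "sat_constr M Theta i th v (C0 j a) =
     (v (YU j a) = (\<Sum>t\<in>Theta j. of_nat (t a) * v (XU j t)))"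
| "sat_constr M Theta i th v (C1 j a) =
     (if royal M (Theta j) a then v (YU j a) \<ge> 1
      else (\<Sum>t\<in>{t \<in> Theta j. t a = M}. v (XU j t)) \<ge> 1)"
| "sat_constr M Theta i th v (C2 j l a) = (v (YU j a) \<ge> v (YU l a))"
| "sat_constr M Theta i th v C3 = (v (XU i th) \<ge> 1)"

definition nonneg_solution ::
  "'a set \<Rightarrow> nat \<Rightarrow> nat \<Rightarrow> (nat \<Rightarrow> ('a \<Rightarrow> nat) set) \<Rightarrow> nat \<Rightarrow> ('a \<Rightarrow> nat)
   \<Rightarrow> ('a unknown \<Rightarrow> 'v::linordered_idom) \<Rightarrow> bool" where
  "nonneg_solution A M k Theta i th v \<longleftrightarrow>
     (\<forall>u\<in>unknowns A k Theta. v u \<ge> 0) \<and>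
     (\<forall>c\<in>constrs A M k Theta. sat_constr M Theta i th v c)"

end

(*
  The system \<Gamma> has non-negative unknowns, integer coefficients of absolute value at most M,
  equalities with right-hand side 0 and inequalities with right-hand side 0 or 1.  A rational
  solution can be moved along a direction inside its support that keeps the tight constraints
  tight; stopping at the first coordinate or constraint that is hit shrinks the support or adds
  a tight constraint, so eventually the support columns are linearly independent on the tight
  rows.  Then at most m unknowns are non-zero, and their values x solve the normal equations
  A^T A x = A^T b of the tight subsystem.  By Cramer's rule |det (A^T A)| x is integral, with
  entries bounded through Leibniz' formula; scaling by this positive integer keeps every
  constraint satisfied because the equalities are homogeneous and all right-hand sides are
  non-negative.
*)
theory Submission
  imports Defs "Jordan_Normal_Form.Determinant"
begin

section \<open>Non-negative solutions of linear systems\<close>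

definition lin_form :: "'u set \<Rightarrow> ('u \<Rightarrow> int) \<Rightarrow> ('u \<Rightarrow> 'v::linordered_idom) \<Rightarrow> 'v" where
  "lin_form U r v = (\<Sum>u\<in>U. of_int (r u) * v u)"

definition nonneg_sol :: "'u set \<Rightarrow> 'c set \<Rightarrow> ('c \<Rightarrow> 'u \<Rightarrow> int) \<Rightarrow> ('c \<Rightarrow> bool) \<Rightarrow> ('c \<Rightarrow> int)
   \<Rightarrow> ('u \<Rightarrow> 'v::linordered_idom) \<Rightarrow> bool" where
  "nonneg_sol U C a e b v \<longleftrightarrow> (\<forall>u\<in>U. 0 \<le> v u) \<and>
     (\<forall>c\<in>C. if e c then lin_form U (a c) v = of_int (b c) else of_int (b c) \<le> lin_form U (a c) v)"

definition nonzeros :: "'u set \<Rightarrow> ('u \<Rightarrow> 'v::zero) \<Rightarrow> 'u set" where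
  "nonzeros U v = {u \<in> U. v u \<noteq> 0}"

definition tight :: "'u set \<Rightarrow> 'c set \<Rightarrow> ('c \<Rightarrow> 'u \<Rightarrow> int) \<Rightarrow> ('c \<Rightarrow> int)
   \<Rightarrow> ('u \<Rightarrow> 'v::linordered_idom) \<Rightarrow> 'c set" where
  "tight U C a b v = {c \<in> C. lin_form U (a c) v = of_int (b c)}"

(* v is a vertex of the polyhedron of non-negative solutions. *)
definition basic :: "'u set \<Rightarrow> 'c set \<Rightarrow> ('c \<Rightarrow> 'u \<Rightarrow> int) \<Rightarrow> ('c \<Rightarrow> int)
   \<Rightarrow> ('u \<Rightarrow> rat) \<Rightarrow> bool" where
  "basic U C a b v \<longleftrightarrow> (\<forall>d :: 'u \<Rightarrow> rat. (\<forall>u. u \<notin> nonzeros U v \<longrightarrow> d u = 0) \<and>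
      (\<forall>c\<in>tight U C a b v. lin_form U (a c) d = 0) \<longrightarrow> (\<forall>u. d u = 0))"

lemma lin_form_add_scaled:
  "lin_form U r (\<lambda>u. v u + t * d u) = lin_form U r v + t * lin_form U r d"
  unfolding lin_form_def by (simp add: algebra_simps sum.distrib sum_distrib_left)

lemma lin_form_uminus: "lin_form U r (\<lambda>u. - d u) = - lin_form U r d"
  unfolding lin_form_def by (simp add: sum_negf)

lemma lin_form_scale: "lin_form U r (\<lambda>u. s * v u) = s * lin_form U r v"
  unfolding lin_form_def by (simp add: sum_distrib_left algebra_simps)

lemma lin_form_of_int:
  "lin_form U r (\<lambda>u. of_int (w u) :: 'v::linordered_idom) = of_int (lin_form U r w)"
  unfolding lin_form_def by simp

lemma lin_form_cong: "(\<And>u. u \<in> U \<Longrightarrow> v u = v' u) \<Longrightarrow> lin_form U r v = lin_form U r v'"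
  unfolding lin_form_def by (rule sum.cong) auto

lemma lin_form_diff: "lin_form U (\<lambda>u. r u - r' u) v = lin_form U r v - lin_form U r' v"
  unfolding lin_form_def by (simp add: algebra_simps sum_subtractf)

lemma lin_form_indicator:
  assumes "finite U" and "u\<^sub>0 \<in> U"
  shows "lin_form U (\<lambda>u. of_bool (u = u\<^sub>0)) v = v u\<^sub>0"
  using assms unfolding lin_form_def by (simp add: if_distrib)

lemma lin_form_enum:
  assumes "finite U" and "S \<subseteq> U" and f: "bij_betw f {0..<n} S" and "\<forall>u\<in>U - S. d u = 0"
  shows "lin_form U r d = (\<Sum>j = 0..<n. of_int (r (f j)) * d (f j))"
proof -
  have "lin_form U r d = (\<Sum>u\<in>S. of_int (r u) * d u)"
    unfolding lin_form_def using assms by (intro sum.mono_neutral_right) auto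
  also have "\<dots> = (\<Sum>j = 0..<n. of_int (r (f j)) * d (f j))"
    by (rule sum.reindex_bij_betw[OF f, symmetric])
  finally show ?thesis .
qed

lemma nonneg_sol_of_int_iff:
  "nonneg_sol U C a e b (\<lambda>u. of_int (w u) :: 'v::linordered_idom) \<longleftrightarrow> nonneg_sol U C a e b w"
  unfolding nonneg_sol_def lin_form_of_int of_int_le_iff of_int_eq_iff of_int_0_le_iff
    of_int_eq_id id_apply ..

lemma nonneg_sol_cong:
  "(\<And>u. u \<in> U \<Longrightarrow> v u = v' u) \<Longrightarrow> nonneg_sol U C a e b v \<longleftrightarrow> nonneg_sol U C a e b v'"
  unfolding nonneg_sol_def using lin_form_cong[of U v v'] by simp

lemma nonneg_sol_scale:
  fixes v :: "'u \<Rightarrow> 'v::linordered_idom"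
  assumes "nonneg_sol U C a e b v" and "1 \<le> D"
    and "\<forall>c\<in>C. e c \<longrightarrow> b c = 0" and "\<forall>c\<in>C. 0 \<le> b c"
  shows "nonneg_sol U C a e b (\<lambda>u. D * v u)"
  unfolding nonneg_sol_def lin_form_scale
proof (intro conjI ballI)
  fix u assume "u \<in> U"
  with assms(1,2) show "0 \<le> D * v u" unfolding nonneg_sol_def by simp
next
  fix c assume "c \<in> C"
  then have "if e c then lin_form U (a c) v = of_int (b c) else of_int (b c) \<le> lin_form U (a c) v"
    using assms(1) unfolding nonneg_sol_def by blast
  moreover have "(of_int (b c) :: 'v) \<le> D * of_int (b c)"
    using mult_right_mono[OF assms(2), of "of_int (b c)"] assms(4) \<open>c \<in> C\<close> by simp
  ultimately show "if e c then D * lin_form U (a c) v = of_int (b c)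
                   else of_int (b c) \<le> D * lin_form U (a c) v"
    using assms(2,3) \<open>c \<in> C\<close> by (auto intro: order_trans mult_left_mono)
qed

lemma nonneg_sol_int_multiple:
  fixes v :: "'u \<Rightarrow> rat" and w :: "'u \<Rightarrow> int"
  assumes "nonneg_sol U C a e b v" and "0 < D"
    and "\<forall>c\<in>C. e c \<longrightarrow> b c = 0" and "\<forall>c\<in>C. 0 \<le> b c"
    and w: "\<And>u. u \<in> U \<Longrightarrow> of_int (w u) = of_int D * v u"
  shows "nonneg_sol U C a e b w"
proof -
  have "nonneg_sol U C a e b (\<lambda>u. of_int D * v u)"
    using assms(1-4) by (intro nonneg_sol_scale) auto
  then have "nonneg_sol U C a e b (\<lambda>u. rat_of_int (w u))"
    by (simp add: nonneg_sol_cong[OF w])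
  then show ?thesis by (simp only: nonneg_sol_of_int_iff)
qed

lemma nonneg_sol_not_tight:
  assumes sol: "nonneg_sol U C a e b v" and "c \<in> C" and "c \<notin> tight U C a b v"
  shows "\<not> e c \<and> of_int (b c) < lin_form U (a c) v"
proof -
  have "lin_form U (a c) v \<noteq> of_int (b c)" using assms(2,3) unfolding tight_def by simp
  moreover have "if e c then lin_form U (a c) v = of_int (b c) else of_int (b c) \<le> lin_form U (a c) v"
    using sol \<open>c \<in> C\<close> unfolding nonneg_sol_def by blast
  ultimately show ?thesis by (simp split: if_splits)
qed

lemma not_basic_descent_direction:
  assumes "\<not> basic U C a b v"
  obtains d :: "'u \<Rightarrow> rat" where "\<forall>u. u \<notin> nonzeros U v \<longrightarrow> d u = 0"
    and "\<forall>c\<in>tight U C a b v. lin_form U (a c) d = 0" and "\<exists>u\<in>nonzeros U v. d u < 0"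
proof -
  obtain d u where d0: "\<forall>u. u \<notin> nonzeros U v \<longrightarrow> d u = 0"
    and dT: "\<forall>c\<in>tight U C a b v. lin_form U (a c) d = 0" and "d u \<noteq> (0::rat)"
    using assms unfolding basic_def by blast
  then have u: "u \<in> nonzeros U v" by blast
  show thesis
  proof (cases "d u < 0")
    case True
    with d0 dT u show thesis by (intro that[of d]) blast+
  next
    case False
    with \<open>d u \<noteq> 0\<close> have "- d u < 0" by simp
    with d0 dT u show thesis by (intro that[of "\<lambda>u. - d u"]) (auto simp: lin_form_uminus)
  qed
qed

lemma nonneg_sol_shift:
  fixes v d :: "'u \<Rightarrow> 'v::linordered_field"
  assumes sol: "nonneg_sol U C a e b v" and t: "0 \<le> t"
    and dT: "\<forall>c\<in>tight U C a b v. lin_form U (a c) d = 0"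
    and coord: "\<forall>u\<in>U. d u < 0 \<longrightarrow> t * - d u \<le> v u"
    and constr: "\<forall>c\<in>C - tight U C a b v. lin_form U (a c) d < 0 \<longrightarrow>
                   t * - lin_form U (a c) d \<le> lin_form U (a c) v - of_int (b c)"
  shows "nonneg_sol U C a e b (\<lambda>u. v u + t * d u)"
  unfolding nonneg_sol_def lin_form_add_scaled
proof (intro conjI ballI)
  fix u assume "u \<in> U"
  with sol coord t show "0 \<le> v u + t * d u"
    unfolding nonneg_sol_def by (cases "d u < 0") (auto simp: algebra_simps)
next
  fix c assume "c \<in> C"
  show "if e c then lin_form U (a c) v + t * lin_form U (a c) d = of_int (b c)
        else of_int (b c) \<le> lin_form U (a c) v + t * lin_form U (a c) d"
  proof (cases "c \<in> tight U C a b v")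
    case True
    with sol \<open>c \<in> C\<close> dT show ?thesis unfolding nonneg_sol_def by simp
  next
    case False
    with nonneg_sol_not_tight[OF sol \<open>c \<in> C\<close>]
    have "\<not> e c" and lt: "of_int (b c) < lin_form U (a c) v" by auto
    moreover have "of_int (b c) \<le> lin_form U (a c) v + t * lin_form U (a c) d"
    proof (cases "lin_form U (a c) d < 0")
      case True
      with constr \<open>c \<in> C\<close> False show ?thesis by (auto simp: algebra_simps)
    next
      case False
      with t lt show ?thesis by (simp add: add_increasing2 less_imp_le)
    qed
    ultimately show ?thesis by simp
  qed
qed

lemma max_step_length:
  fixes p q :: "'i \<Rightarrow> 'a::linordered_field"
  assumes "finite I" and "I \<noteq> {}" and pos: "\<forall>i\<in>I. 0 < p i \<and> 0 < q i"
  obtains t where "0 < t" and "\<forall>i\<in>I. t * q i \<le> p i" and "\<exists>i\<in>I. t * q i = p i"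
proof -
  define t where "t = Min ((\<lambda>i. p i / q i) ` I)"
  have "t \<in> (\<lambda>i. p i / q i) ` I" unfolding t_def using assms(1,2) by (intro Min_in) auto
  then obtain i\<^sub>0 where "i\<^sub>0 \<in> I" and t: "t = p i\<^sub>0 / q i\<^sub>0" by blast
  have "t \<le> p i / q i" if "i \<in> I" for i unfolding t_def using assms(1) that by (intro Min_le) auto
  with pos have "\<forall>i\<in>I. t * q i \<le> p i" by (simp add: pos_le_divide_eq)
  moreover have "0 < t" and "t * q i\<^sub>0 = p i\<^sub>0" using pos \<open>i\<^sub>0 \<in> I\<close> unfolding t by auto
  ultimately show thesis using that \<open>i\<^sub>0 \<in> I\<close> by blast
qed

lemma nonneg_sol_improve:
  fixes v :: "'u \<Rightarrow> rat"
  assumes "finite U" and "finite C" and sol: "nonneg_sol U C a e b v" and "\<not> basic U C a b v"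
  obtains v' :: "'u \<Rightarrow> rat" where "nonneg_sol U C a e b v'"
    and "nonzeros U v' \<subseteq> nonzeros U v" and "tight U C a b v \<subseteq> tight U C a b v'"
    and "nonzeros U v' \<noteq> nonzeros U v \<or> tight U C a b v' \<noteq> tight U C a b v"
proof -
  define S where "S = nonzeros U v"
  define T where "T = tight U C a b v"
  obtain d :: "'u \<Rightarrow> rat" where dS: "\<forall>u. u \<notin> S \<longrightarrow> d u = 0" and dT: "\<forall>c\<in>T. lin_form U (a c) d = 0"
    and dneg: "\<exists>u\<in>S. d u < 0"
    using not_basic_descent_direction[OF \<open>\<not> basic U C a b v\<close>] unfolding S_def T_def by blast
  \<comment> \<open>walk along \<open>d\<close> until a coordinate or a non-tight constraint is hit\<close>
  define I where "I = Inl ` {u\<in>S. d u < 0} \<union> Inr ` {c\<in>C - T. lin_form U (a c) d < 0}"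
  define p where "p = case_sum v (\<lambda>c. lin_form U (a c) v - of_int (b c))"
  define q where "q = case_sum (\<lambda>u. - d u) (\<lambda>c. - lin_form U (a c) d)"
  obtain t where "0 < t" and le: "\<forall>i\<in>I. t * q i \<le> p i" and hit: "\<exists>i\<in>I. t * q i = p i"
  proof (rule max_step_length)
    show "finite I" unfolding I_def S_def nonzeros_def using assms(1,2) by auto
    show "I \<noteq> {}" using dneg unfolding I_def by blast
    show "\<forall>i\<in>I. 0 < p i \<and> 0 < q i"
      using sol nonneg_sol_not_tight[OF sol] unfolding I_def p_def q_def S_def T_def nonzeros_def
      by (force simp: nonneg_sol_def)
  qed
  define v' where "v' = (\<lambda>u. v u + t * d u)"
  have sol': "nonneg_sol U C a e b v'"
    unfolding v'_def
  proof (rule nonneg_sol_shift[OF sol less_imp_le[OF \<open>0 < t\<close>]])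
    show "\<forall>c\<in>tight U C a b v. lin_form U (a c) d = 0" using dT unfolding T_def .
    show "\<forall>u\<in>U. d u < 0 \<longrightarrow> t * - d u \<le> v u"
      using le dS unfolding I_def p_def q_def by force
    show "\<forall>c\<in>C - tight U C a b v. lin_form U (a c) d < 0 \<longrightarrow>
            t * - lin_form U (a c) d \<le> lin_form U (a c) v - of_int (b c)"
      using le unfolding I_def p_def q_def T_def by force
  qed
  have S': "nonzeros U v' \<subseteq> S"
    using dS unfolding v'_def S_def nonzeros_def by auto
  have T': "T \<subseteq> tight U C a b v'"
    using dT unfolding v'_def T_def tight_def by (auto simp: lin_form_add_scaled)
  from hit obtain i where "i \<in> I" and "t * q i = p i" by blast
  then have "nonzeros U v' \<noteq> S \<or> tight U C a b v' \<noteq> T"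
  proof (cases i)
    case (Inl u)
    with \<open>i \<in> I\<close> \<open>t * q i = p i\<close> have "u \<in> S" and "v' u = 0"
      unfolding I_def p_def q_def v'_def by auto
    then show ?thesis unfolding nonzeros_def by auto
  next
    case (Inr c)
    with \<open>i \<in> I\<close> \<open>t * q i = p i\<close> have "c \<in> C - T" and "lin_form U (a c) v' = of_int (b c)"
      unfolding I_def p_def q_def v'_def by (auto simp: lin_form_add_scaled)
    then show ?thesis unfolding tight_def by auto
  qed
  with sol' S' T' show thesis unfolding S_def T_def by (rule that)
qed

lemma exists_basic_nonneg_sol:
  fixes v :: "'u \<Rightarrow> rat"
  assumes "finite U" and "finite C" and "nonneg_sol U C a e b v"
  obtains v' :: "'u \<Rightarrow> rat" where "nonneg_sol U C a e b v'" and "basic U C a b v'"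
proof -
  \<comment> \<open>each improvement shrinks the support or, keeping it, enlarges the set of tight constraints\<close>
  define \<mu> where "\<mu> v = (card (nonzeros U v), card C - card (tight U C a b v))" for v :: "'u \<Rightarrow> rat"
  have "wf (inv_image (less_than <*lex*> less_than) \<mu>)" by auto
  then have "\<exists>v'. nonneg_sol U C a e b v' \<and> basic U C a b v'" using assms(3)
  proof (induction v rule: wf_induct_rule)
    case (less v)
    show ?case
    proof (cases "basic U C a b v")
      case False
      then obtain v' :: "'u \<Rightarrow> rat" where sol': "nonneg_sol U C a e b v'"
        and S: "nonzeros U v' \<subseteq> nonzeros U v" and T: "tight U C a b v \<subseteq> tight U C a b v'"
        and ne: "nonzeros U v' \<noteq> nonzeros U v \<or> tight U C a b v' \<noteq> tight U C a b v"
        using nonneg_sol_improve[OF assms(1,2) less.prems] by blast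
      have fS: "finite (nonzeros U v)" and fT: "finite (tight U C a b v')"
        and TC: "tight U C a b v' \<subseteq> C"
        using assms(1,2) unfolding nonzeros_def tight_def by auto
      have "card (nonzeros U v') < card (nonzeros U v) \<or>
            nonzeros U v' = nonzeros U v \<and> card (tight U C a b v) < card (tight U C a b v')"
        using ne psubset_card_mono[OF fS] psubset_card_mono[OF fT] S T by blast
      moreover have "card (tight U C a b v') \<le> card C" using card_mono[OF assms(2) TC] .
      ultimately have "(v', v) \<in> inv_image (less_than <*lex*> less_than) \<mu>"
        unfolding \<mu>_def by auto
      with less.IH sol' show ?thesis by blast
    qed (use less.prems in blast)
  qed
  with that show thesis by blast
qed

section \<open>Integer matrices\<close>

lemma abs_det_le:
  fixes A :: "'a::linordered_idom mat"
  assumes A: "A \<in> carrier_mat n n" and bd: "\<forall>i<n. \<forall>j<n. \<bar>A $$ (i,j)\<bar> \<le> K"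
  shows "\<bar>det A\<bar> \<le> of_nat (fact n) * K ^ n"
proof -
  have "\<bar>det A\<bar> = \<bar>\<Sum>p | p permutes {0..<n}. signof p * (\<Prod>i = 0..<n. A $$ (i, p i))\<bar>"
    using A unfolding det_def by simp
  also have "\<dots> \<le> (\<Sum>p | p permutes {0..<n}. \<bar>signof p * (\<Prod>i = 0..<n. A $$ (i, p i))\<bar>)"
    by (rule sum_abs)
  also have "\<dots> \<le> (\<Sum>p | p permutes {0..<n}. K ^ n)"
  proof (rule sum_mono)
    fix p assume "p \<in> {p. p permutes {0..<n}}"
    then have "\<bar>A $$ (i, p i)\<bar> \<le> K" if "i \<in> {0..<n}" for i
      using bd that by (simp add: permutes_in_image)
    then have "(\<Prod>i = 0..<n. \<bar>A $$ (i, p i)\<bar>) \<le> (\<Prod>i = 0..<n. K)"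
      by (intro prod_mono) auto
    then show "\<bar>signof p * (\<Prod>i = 0..<n. A $$ (i, p i))\<bar> \<le> K ^ n"
      by (simp add: abs_mult abs_prod sign_def)
  qed
  also have "\<dots> = of_nat (fact n) * K ^ n"
    using card_permutations[of "{0..<n}" n] by simp
  finally show ?thesis .
qed

lemma scalar_prod_self_eq_0_iff:
  fixes x :: "'a::linordered_idom vec"
  assumes "x \<in> carrier_vec n"
  shows "x \<bullet> x = 0 \<longleftrightarrow> x = 0\<^sub>v n"
proof
  assume "x \<bullet> x = 0"
  moreover have "x \<bullet> x = (\<Sum>i\<in>{0..<n}. x $ i * x $ i)"
    using assms by (simp add: scalar_prod_def)
  ultimately have "\<forall>i\<in>{0..<n}. x $ i * x $ i = 0"
    by (simp add: sum_nonneg_eq_0_iff)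
  with assms show "x = 0\<^sub>v n" by (intro eq_vecI) auto
qed (use assms in simp)

lemma det_gram_nonzero:
  fixes A :: "'a::linordered_field mat"
  assumes A: "A \<in> carrier_mat p n" and inj: "\<forall>x\<in>carrier_vec n. A *\<^sub>v x = 0\<^sub>v p \<longrightarrow> x = 0\<^sub>v n"
  shows "det (transpose_mat A * A) \<noteq> 0"
proof
  have G: "transpose_mat A * A \<in> carrier_mat n n" using A by simp
  assume "det (transpose_mat A * A) = 0"
  then obtain x where x: "x \<in> carrier_vec n" "x \<noteq> 0\<^sub>v n" and Gx: "(transpose_mat A * A) *\<^sub>v x = 0\<^sub>v n"
    using det_0_iff_vec_prod_zero_field[OF G] by blast
  have "transpose_mat A *\<^sub>v (A *\<^sub>v x) = 0\<^sub>v n"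
    using A x Gx by simp
  then have "(A *\<^sub>v x) \<bullet> (A *\<^sub>v x) = 0"
    using A x transpose_vec_mult_scalar[of A p n x "A *\<^sub>v x"] by simp
  then have "A *\<^sub>v x = 0\<^sub>v p"
    using A x scalar_prod_self_eq_0_iff[of "A *\<^sub>v x" p] by simp
  with inj x show False by blast
qed

lemma cols_le_rows_if_injective:
  fixes A :: "'a::field mat"
  assumes A: "A \<in> carrier_mat p n" and inj: "\<forall>x\<in>carrier_vec n. A *\<^sub>v x = 0\<^sub>v p \<longrightarrow> x = 0\<^sub>v n"
  shows "n \<le> p"
proof (rule ccontr)
  assume "\<not> n \<le> p"
  \<comment> \<open>pad \<open>A\<close> with zero rows to a singular square matrix\<close>
  define B where "B = mat n n (\<lambda>(i,j). if i < p then A $$ (i,j) else 0)"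
  have B: "B \<in> carrier_mat n n" unfolding B_def by simp
  have "det B = (\<Sum>j<n. B $$ (n - 1, j) * cofactor B (n - 1) j)"
    using \<open>\<not> n \<le> p\<close> by (intro laplace_expansion_row[OF B]) auto
  also have "\<dots> = 0" using \<open>\<not> n \<le> p\<close> unfolding B_def by (simp add: less_diff_conv2)
  finally obtain x where x: "x \<in> carrier_vec n" "x \<noteq> 0\<^sub>v n" and Bx: "B *\<^sub>v x = 0\<^sub>v n"
    using det_0_iff_vec_prod_zero_field[OF B] by blast
  have "A *\<^sub>v x = 0\<^sub>v p"
  proof (rule eq_vecI)
    fix i assume "i < dim_vec (0\<^sub>v p)"
    then have "(A *\<^sub>v x) $ i = (B *\<^sub>v x) $ i"
      using A x \<open>\<not> n \<le> p\<close> unfolding B_def by (auto simp: scalar_prod_def intro!: sum.cong)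
    with Bx \<open>i < dim_vec (0\<^sub>v p)\<close> \<open>\<not> n \<le> p\<close> show "(A *\<^sub>v x) $ i = 0\<^sub>v p $ i" by simp
  qed (use A in simp)
  with inj x show False by blast
qed

lemma cramer_of_int:
  fixes G :: "int mat" and h :: "int vec" and x :: "'a::{field,ring_char_0} vec"
  assumes G: "G \<in> carrier_mat n n" and x: "x \<in> carrier_vec n" and k: "k < n"
    and Gx: "map_mat of_int G *\<^sub>v x = map_vec of_int h"
  shows "of_int (det (replace_col G h k)) = x $ k * of_int (det G)"
proof -
  have "h \<in> carrier_vec n" using arg_cong[OF Gx, of dim_vec] G by simp
  then have rc: "replace_col (map_mat of_int G) (map_vec of_int h) k = map_mat of_int (replace_col G h k)"
    using G unfolding replace_col_def by (intro eq_matI) auto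
  have "of_int (det (replace_col G h k)) = det (replace_col (map_mat of_int G) (map_vec of_int h) k)"
    unfolding rc by simp
  also have "\<dots> = x $ k * det (map_mat of_int G)"
    unfolding Gx[symmetric] using G x k by (intro cramer_lemma_mat) auto
  finally show ?thesis by simp
qed

lemma abs_scalar_prod_le:
  fixes x y :: "'a::linordered_idom vec"
  assumes "x \<in> carrier_vec p" "y \<in> carrier_vec p"
    and "\<forall>i<p. \<bar>x $ i\<bar> \<le> K" "\<forall>i<p. \<bar>y $ i\<bar> \<le> K"
  shows "\<bar>x \<bullet> y\<bar> \<le> of_nat p * K\<^sup>2"
proof -
  have "\<bar>x \<bullet> y\<bar> \<le> (\<Sum>i<p. \<bar>x $ i\<bar> * \<bar>y $ i\<bar>)"
    using assms(1,2) sum_abs[of "\<lambda>i. x $ i * y $ i" "{..<p}"]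
    by (simp add: scalar_prod_def lessThan_atLeast0 abs_mult)
  also have "\<dots> \<le> (\<Sum>i<p. K * K)"
    using assms(3,4) by (intro sum_mono mult_mono) auto
  finally show ?thesis by (simp add: power2_eq_square)
qed

lemma abs_det_replace_col_gram_le:
  fixes A :: "'a::linordered_idom mat"
  assumes A: "A \<in> carrier_mat p n" and b: "b \<in> carrier_vec p"
    and bdA: "\<forall>i<p. \<forall>j<n. \<bar>A $$ (i,j)\<bar> \<le> K" and bdb: "\<forall>i<p. \<bar>b $ i\<bar> \<le> K"
  shows "\<bar>det (replace_col (transpose_mat A * A) (transpose_mat A *\<^sub>v b) k)\<bar> \<le> fact n * (of_nat p * K\<^sup>2) ^ n"
proof -
  have entries: "\<bar>replace_col (transpose_mat A * A) (transpose_mat A *\<^sub>v b) k $$ (i,j)\<bar> \<le> of_nat p * K\<^sup>2"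
    if "i < n" "j < n" for i j
  proof -
    have col: "col A i \<in> carrier_vec p" "\<forall>l<p. \<bar>col A i $ l\<bar> \<le> K"
      using A bdA \<open>i < n\<close> by auto
    have "\<bar>col A i \<bullet> col A j\<bar> \<le> of_nat p * K\<^sup>2"
      using A bdA \<open>j < n\<close> by (intro abs_scalar_prod_le[OF col(1) _ col(2)]) auto
    moreover have "\<bar>col A i \<bullet> b\<bar> \<le> of_nat p * K\<^sup>2"
      using b bdb by (intro abs_scalar_prod_le[OF col(1) _ col(2)]) auto
    ultimately show ?thesis using A that unfolding replace_col_def by auto
  qed
  have "replace_col (transpose_mat A * A) (transpose_mat A *\<^sub>v b) k \<in> carrier_mat n n"
    using A unfolding replace_col_def by auto
  from abs_det_le[OF this] entries show ?thesis by simp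
qed

lemma integral_multiple_of_solution:
  fixes A :: "int mat" and b :: "int vec" and x :: "rat vec" and K :: int
  assumes A: "A \<in> carrier_mat p n" and b: "b \<in> carrier_vec p" and x: "x \<in> carrier_vec n"
    and Ax: "map_mat of_int A *\<^sub>v x = map_vec of_int b"
    and inj: "\<forall>y\<in>carrier_vec n. map_mat rat_of_int A *\<^sub>v y = 0\<^sub>v p \<longrightarrow> y = 0\<^sub>v n"
    and bdA: "\<forall>i<p. \<forall>j<n. \<bar>A $$ (i,j)\<bar> \<le> K" and bdb: "\<forall>i<p. \<bar>b $ i\<bar> \<le> K"
  obtains D :: int and z :: "int vec" where "0 < D" and "z \<in> carrier_vec n"
    and "\<forall>j<n. of_int (z $ j) = of_int D * x $ j"
    and "\<forall>j<n. \<bar>z $ j\<bar> \<le> fact n * (int p * K\<^sup>2) ^ n"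
proof -
  \<comment> \<open>\<open>x\<close> is the unique solution of the normal equations \<open>A\<^sup>T A x = A\<^sup>T b\<close>; apply Cramer's rule to them\<close>
  define Aq where "Aq = map_mat rat_of_int A"
  define G where "G = transpose_mat A * A"
  define h where "h = transpose_mat A *\<^sub>v b"
  have Aq: "Aq \<in> carrier_mat p n" and G: "G \<in> carrier_mat n n"
    using A unfolding Aq_def G_def by auto
  have Gq: "map_mat of_int G = transpose_mat Aq * Aq"
    using A unfolding G_def Aq_def by (simp add: of_int_hom.mat_hom_mult[of _ n p _ n] map_mat_transpose)
  have Gx: "map_mat of_int G *\<^sub>v x = map_vec of_int h"
    using A b x Ax unfolding Gq h_def Aq_def
    by (simp add: of_int_hom.mult_mat_vec_hom[of _ n p] map_mat_transpose)
  have "det (map_mat rat_of_int G) \<noteq> 0"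
    unfolding Gq by (rule det_gram_nonzero[OF Aq]) (use inj in \<open>unfold Aq_def\<close>)
  then have detG: "det G \<noteq> 0" by simp
  define z where "z = vec n (\<lambda>k. sgn (det G) * det (replace_col G h k))"
  have z_eq: "\<forall>j<n. of_int (z $ j) = of_int \<bar>det G\<bar> * x $ j"
  proof (intro allI impI)
    fix j assume "j < n"
    then have "of_int (z $ j) = of_int (sgn (det G)) * (x $ j * of_int (det G) :: rat)"
      unfolding z_def using cramer_of_int[OF G x _ Gx] by simp
    then show "of_int (z $ j) = of_int \<bar>det G\<bar> * x $ j"
      by (simp add: abs_sgn mult.commute mult.left_commute)
  qed
  have "\<forall>j<n. \<bar>z $ j\<bar> \<le> fact n * (int p * K\<^sup>2) ^ n"
    using abs_det_replace_col_gram_le[OF A b bdA bdb] detG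
    unfolding z_def G_def h_def by (simp add: abs_mult abs_sgn_eq)
  moreover have "0 < \<bar>det G\<bar>" and "z \<in> carrier_vec n" using detG unfolding z_def by auto
  ultimately show thesis using z_eq that by blast
qed

section \<open>Bounded integer solutions\<close>

definition vec_on :: "(nat \<Rightarrow> 'u) \<Rightarrow> nat \<Rightarrow> 'a vec \<Rightarrow> 'u \<Rightarrow> 'a::zero" where
  "vec_on f n y u = (if u \<in> f ` {0..<n} then y $ inv_into {0..<n} f u else 0)"

lemma vec_on_apply: "inj_on f {0..<n} \<Longrightarrow> j < n \<Longrightarrow> vec_on f n y (f j) = y $ j"
  unfolding vec_on_def by simp

lemma vec_on_vec: "vec_on f n (vec n (\<lambda>j. g (f j))) u = (if u \<in> f ` {0..<n} then g u else 0)"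
  unfolding vec_on_def by (auto simp: f_inv_into_f inv_into_into[of u f "{0..<n}", simplified])

lemma lin_form_vec_on:
  assumes "finite U" and "f ` {0..<n} \<subseteq> U" and "inj_on f {0..<n}"
  shows "lin_form U r (vec_on f n y) = (\<Sum>j = 0..<n. of_int (r (f j)) * y $ j)"
proof -
  have "lin_form U r (vec_on f n y) = (\<Sum>j = 0..<n. of_int (r (f j)) * vec_on f n y (f j))"
    using assms by (intro lin_form_enum[of U "f ` {0..<n}"]) (auto simp: bij_betw_imageI vec_on_def)
  also have "\<dots> = (\<Sum>j = 0..<n. of_int (r (f j)) * y $ j)"
    using assms(3) by (intro sum.cong) (simp_all add: vec_on_apply)
  finally show ?thesis .
qed

lemma basic_kernel_trivial:
  fixes y :: "rat vec"
  assumes "basic U C a b v" and f: "bij_betw f {0..<n} (nonzeros U v)" and y: "y \<in> carrier_vec n"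
    and "\<forall>c\<in>tight U C a b v. lin_form U (a c) (vec_on f n y) = 0"
  shows "y = 0\<^sub>v n"
proof (rule eq_vecI)
  have "\<forall>u. u \<notin> nonzeros U v \<longrightarrow> vec_on f n y u = 0"
    using f unfolding bij_betw_def vec_on_def by auto
  with assms(1,4) have "vec_on f n y u = 0" for u unfolding basic_def by blast
  with f show "y $ j = 0\<^sub>v n $ j" if "j < dim_vec (0\<^sub>v n)" for j
    using vec_on_apply[of f n j y] that unfolding bij_betw_def by simp
qed (use y in simp)

lemma basic_sol_support_system:
  fixes v :: "'u \<Rightarrow> rat" and K :: int
  assumes fU: "finite U" and fC: "finite C" and basic: "basic U C a b v"
    and aK: "\<forall>c\<in>C. \<forall>u\<in>U. \<bar>a c u\<bar> \<le> K" and bK: "\<forall>c\<in>C. \<bar>b c\<bar> \<le> K"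
    and n: "n = card (nonzeros U v)" and p: "p = card (tight U C a b v)"
  obtains f :: "nat \<Rightarrow> 'u" and A :: "int mat" and bv :: "int vec"
  where "bij_betw f {0..<n} (nonzeros U v)"
    and "A \<in> carrier_mat p n" and "bv \<in> carrier_vec p"
    and "map_mat of_int A *\<^sub>v vec n (\<lambda>j. v (f j)) = map_vec of_int bv"
    and "\<forall>y\<in>carrier_vec n. map_mat rat_of_int A *\<^sub>v y = 0\<^sub>v p \<longrightarrow> y = 0\<^sub>v n"
    and "\<forall>i<p. \<forall>j<n. \<bar>A $$ (i,j)\<bar> \<le> K" and "\<forall>i<p. \<bar>bv $ i\<bar> \<le> K"
proof -
  define S where "S = nonzeros U v"
  define T where "T = tight U C a b v"
  have SU: "S \<subseteq> U" and TC: "T \<subseteq> C" unfolding S_def T_def nonzeros_def tight_def by auto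
  obtain f where f: "bij_betw f {0..<n} S"
    using ex_bij_betw_nat_finite[of S] fU SU finite_subset unfolding n S_def by blast
  obtain g where g: "bij_betw g {0..<p} T"
    using ex_bij_betw_nat_finite[of T] fC TC finite_subset unfolding p T_def by blast
  have f_inj: "inj_on f {0..<n}" and f_img: "f ` {0..<n} = S" using f unfolding bij_betw_def by auto
  have g_img: "g ` {0..<p} = T" using g unfolding bij_betw_def by auto
  define A where "A = mat p n (\<lambda>(i,j). a (g i) (f j))"
  define bv where "bv = vec p (\<lambda>i. b (g i))"
  have f_U: "f ` {0..<n} \<subseteq> U" using f_img SU by simp
  have g_C: "g i \<in> C" if "i < p" for i using g_img TC that by auto
  have row: "(map_mat rat_of_int A *\<^sub>v y) $ i = lin_form U (a (g i)) (vec_on f n y)"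
    if "y \<in> carrier_vec n" "i < p" for y i
    using that unfolding lin_form_vec_on[OF fU f_U f_inj] A_def by (simp add: scalar_prod_def)
  have "vec_on f n (vec n (\<lambda>j. v (f j))) u = v u" if "u \<in> U" for u
    using that unfolding vec_on_vec f_img S_def nonzeros_def by auto
  then have "lin_form U r (vec_on f n (vec n (\<lambda>j. v (f j)))) = lin_form U r v" for r
    by (rule lin_form_cong)
  with row g_img have Ax: "map_mat of_int A *\<^sub>v vec n (\<lambda>j. v (f j)) = map_vec of_int bv"
    unfolding bv_def T_def tight_def by (intro eq_vecI) (auto simp: A_def)
  have inj: "\<forall>y\<in>carrier_vec n. map_mat rat_of_int A *\<^sub>v y = 0\<^sub>v p \<longrightarrow> y = 0\<^sub>v n"
  proof (intro ballI impI)
    fix y :: "rat vec" assume y: "y \<in> carrier_vec n" and "map_mat rat_of_int A *\<^sub>v y = 0\<^sub>v p"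
    with row have "lin_form U (a (g i)) (vec_on f n y) = 0" if "i < p" for i
      using that by (metis index_zero_vec(1))
    with g_img[symmetric] have "\<forall>c\<in>tight U C a b v. lin_form U (a c) (vec_on f n y) = 0"
      unfolding T_def by auto
    with basic f y show "y = 0\<^sub>v n" unfolding S_def by (rule basic_kernel_trivial)
  qed
  have "\<forall>i<p. \<forall>j<n. \<bar>A $$ (i,j)\<bar> \<le> K" and "\<forall>i<p. \<bar>bv $ i\<bar> \<le> K"
    using aK bK f_U g_C unfolding A_def bv_def by (auto simp: image_subset_iff)
  moreover have "A \<in> carrier_mat p n" and "bv \<in> carrier_vec p" unfolding A_def bv_def by simp_all
  ultimately show thesis using that[OF f[unfolded S_def] _ _ Ax inj] by blast
qed

lemma basic_nonneg_sol_integral: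
  fixes v :: "'u \<Rightarrow> rat" and K :: int
  assumes fU: "finite U" and fC: "finite C" and hom: "\<forall>c\<in>C. e c \<longrightarrow> b c = 0"
    and bK: "\<forall>c\<in>C. 0 \<le> b c \<and> b c \<le> K" and aK: "\<forall>c\<in>C. \<forall>u\<in>U. \<bar>a c u\<bar> \<le> K"
    and sol: "nonneg_sol U C a e b v" and "basic U C a b v"
  obtains w :: "'u \<Rightarrow> int" and n where "nonneg_sol U C a e b w"
    and "card (nonzeros U w) \<le> n" and "n \<le> card C"
    and "\<forall>u\<in>U. \<bar>w u\<bar> \<le> fact n * (int (card C) * K\<^sup>2) ^ n"
proof -
  define n where "n = card (nonzeros U v)"
  define p where "p = card (tight U C a b v)"
  have "\<forall>c\<in>C. \<bar>b c\<bar> \<le> K" using bK by auto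
  from basic_sol_support_system[OF fU fC \<open>basic U C a b v\<close> aK this n_def p_def]
  obtain f A bv where f: "bij_betw f {0..<n} (nonzeros U v)" and A: "A \<in> carrier_mat p n"
    and bv: "bv \<in> carrier_vec p" and Ax: "map_mat of_int A *\<^sub>v vec n (\<lambda>j. v (f j)) = map_vec of_int bv"
    and inj: "\<forall>y\<in>carrier_vec n. map_mat rat_of_int A *\<^sub>v y = 0\<^sub>v p \<longrightarrow> y = 0\<^sub>v n"
    and bdA: "\<forall>i<p. \<forall>j<n. \<bar>A $$ (i,j)\<bar> \<le> K" and bdb: "\<forall>i<p. \<bar>bv $ i\<bar> \<le> K" .
  have "n \<le> p" using cols_le_rows_if_injective[of "map_mat rat_of_int A"] A inj by simp
  moreover have "p \<le> card C" unfolding p_def using fC by (intro card_mono) (auto simp: tight_def)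
  ultimately have "n \<le> card C" by simp
  obtain D z where "0 < D" and "z \<in> carrier_vec n"
    and z: "\<forall>j<n. of_int (z $ j) = of_int D * vec n (\<lambda>j. v (f j)) $ j"
    and z_le: "\<forall>j<n. \<bar>z $ j\<bar> \<le> fact n * (int p * K\<^sup>2) ^ n"
    by (rule integral_multiple_of_solution[OF A bv vec_carrier Ax inj bdA bdb])
  define w where "w = vec_on f n z"
  have f_img: "f ` {0..<n} = nonzeros U v" and f_inj: "inj_on f {0..<n}"
    using f unfolding bij_betw_def by auto
  have wv: "rat_of_int (w u) = of_int D * v u" if "u \<in> U" for u
  proof (cases "u \<in> f ` {0..<n}")
    case True
    with z f_inj show ?thesis unfolding w_def by (auto simp: vec_on_apply)
  next
    case False
    with that f_img show ?thesis unfolding w_def vec_on_def nonzeros_def by simp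
  qed
  have "\<forall>c\<in>C. 0 \<le> b c" using bK by blast
  with sol \<open>0 < D\<close> hom have "nonneg_sol U C a e b w" using wv by (rule nonneg_sol_int_multiple)
  moreover have "card (nonzeros U w) \<le> n"
  proof -
    have "nonzeros U w \<subseteq> f ` {0..<n}" unfolding w_def vec_on_def nonzeros_def by auto
    then have "card (nonzeros U w) \<le> card (f ` {0..<n})" by (intro card_mono) auto
    also have "\<dots> \<le> n" using card_image_le[of "{0..<n}" f] by simp
    finally show ?thesis .
  qed
  moreover have "\<forall>u\<in>U. \<bar>w u\<bar> \<le> fact n * (int (card C) * K\<^sup>2) ^ n"
  proof
    fix u
    have "fact n * (int p * K\<^sup>2) ^ n \<le> fact n * (int (card C) * K\<^sup>2) ^ n"
      using \<open>p \<le> card C\<close> by (intro mult_left_mono power_mono mult_right_mono) auto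
    moreover have "\<bar>w u\<bar> \<le> fact n * (int p * K\<^sup>2) ^ n"
      using z_le inv_into_into[of u f "{0..<n}"] unfolding w_def vec_on_def by simp
    ultimately show "\<bar>w u\<bar> \<le> fact n * (int (card C) * K\<^sup>2) ^ n" by linarith
  qed
  ultimately show thesis using that[OF _ _ \<open>n \<le> card C\<close>] by blast
qed

lemma exists_bounded_int_nonneg_sol:
  fixes v :: "'u \<Rightarrow> rat" and K :: int
  assumes "finite U" and "finite C" and "\<forall>c\<in>C. e c \<longrightarrow> b c = 0"
    and "\<forall>c\<in>C. 0 \<le> b c \<and> b c \<le> K" and "\<forall>c\<in>C. \<forall>u\<in>U. \<bar>a c u\<bar> \<le> K"
    and "nonneg_sol U C a e b v"
  obtains w :: "'u \<Rightarrow> int" and n where "nonneg_sol U C a e b w"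
    and "card (nonzeros U w) \<le> n" and "n \<le> card C"
    and "\<forall>u\<in>U. \<bar>w u\<bar> \<le> fact n * (int (card C) * K\<^sup>2) ^ n"
proof -
  obtain v' where "nonneg_sol U C a e b v'" and "basic U C a b v'"
    by (rule exists_basic_nonneg_sol[OF assms(1,2,6)])
  then show thesis using that by (rule basic_nonneg_sol_integral[OF assms(1-5)])
qed

section \<open>The system \<open>\<Gamma>\<close>\<close>

definition x_row :: "nat \<Rightarrow> ('a \<Rightarrow> nat) set \<Rightarrow> (('a \<Rightarrow> nat) \<Rightarrow> int) \<Rightarrow> 'a unknown \<Rightarrow> int" where
  "x_row j T f u = (case u of XU j' t \<Rightarrow> if j' = j \<and> t \<in> T then f t else 0 | YU _ _ \<Rightarrow> 0)"

lemma lin_form_x_row: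
  assumes "finite U" and "XU j ` T \<subseteq> U"
  shows "lin_form U (x_row j T f) v = (\<Sum>t\<in>T. of_int (f t) * v (XU j t))"
proof -
  have "lin_form U (x_row j T f) v = (\<Sum>u\<in>XU j ` T. of_int (x_row j T f u) * v u)"
    unfolding lin_form_def using assms
    by (intro sum.mono_neutral_right) (auto simp: x_row_def split: unknown.splits)
  also have "\<dots> = (\<Sum>t\<in>T. of_int (f t) * v (XU j t))"
    by (subst sum.reindex) (auto simp: inj_on_def x_row_def)
  finally show ?thesis .
qed

(* (E0) is encoded as Y - (sum of theta'(alpha) X) = 0 and (E2) as Y_j - Y_l >= 0. *)
definition gamma_coeff ::
  "nat \<Rightarrow> (nat \<Rightarrow> ('a \<Rightarrow> nat) set) \<Rightarrow> nat \<Rightarrow> ('a \<Rightarrow> nat) \<Rightarrow> 'a constr \<Rightarrow> 'a unknown \<Rightarrow> int" where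
  "gamma_coeff M Theta i th c = (case c of
      C0 j x \<Rightarrow> (\<lambda>u. of_bool (u = YU j x) - x_row j (Theta j) (\<lambda>t. int (t x)) u)
    | C1 j x \<Rightarrow> (if royal M (Theta j) x then (\<lambda>u. of_bool (u = YU j x))
                else x_row j {t \<in> Theta j. t x = M} (\<lambda>_. 1))
    | C2 j l x \<Rightarrow> (\<lambda>u. of_bool (u = YU j x) - of_bool (u = YU l x))
    | C3 \<Rightarrow> (\<lambda>u. of_bool (u = XU i th)))"

definition gamma_is_eq :: "'a constr \<Rightarrow> bool" where
  "gamma_is_eq c = (case c of C0 _ _ \<Rightarrow> True | _ \<Rightarrow> False)"

definition gamma_rhs :: "'a constr \<Rightarrow> int" where
  "gamma_rhs c = (case c of C1 _ _ \<Rightarrow> 1 | C3 \<Rightarrow> 1 | _ \<Rightarrow> 0)"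

lemma finite_Theta:
  assumes "finite A" and "\<forall>t\<in>Theta j. counting_type A M t"
  shows "finite (Theta j)"
proof (rule finite_subset)
  show "Theta j \<subseteq> {f. \<forall>x. (x \<in> A \<longrightarrow> f x \<in> {0..M}) \<and> (x \<notin> A \<longrightarrow> f x = 0)}"
    using assms(2) unfolding counting_type_def by auto
  show "finite {f. \<forall>x. (x \<in> A \<longrightarrow> f x \<in> {0..M}) \<and> (x \<notin> A \<longrightarrow> f x = (0::nat))}"
    using assms(1) by (intro finite_set_of_finite_funs) auto
qed

lemma finite_unknowns:
  assumes "finite A" and "\<forall>j\<in>{1..k}. \<forall>t\<in>Theta j. counting_type A M t"
  shows "finite (unknowns A k Theta)"
proof -
  have "unknowns A k Theta \<subseteq> (\<Union>j\<in>{1..k}. XU j ` Theta j) \<union> (\<lambda>(j, x). YU j x) ` ({1..k} \<times> A)"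
    unfolding unknowns_def types_of_tuple_def by auto
  moreover have "finite (\<Union>j\<in>{1..k}. XU j ` Theta j)"
  proof (intro finite_UN_I finite_imageI)
    fix j assume "j \<in> {1..k}"
    with assms(2) show "finite (Theta j)" by (intro finite_Theta[OF assms(1)]) blast
  qed simp
  ultimately show ?thesis using assms(1) finite_subset by blast
qed

lemma finite_constrs:
  assumes "finite A"
  shows "finite (constrs A M k Theta)"
proof (rule finite_subset)
  show "constrs A M k Theta \<subseteq> (\<lambda>(j, x). C0 j x) ` ({1..k} \<times> A) \<union> (\<lambda>(j, x). C1 j x) ` ({1..k} \<times> A)
      \<union> (\<lambda>(j, l, x). C2 j l x) ` ({1..k} \<times> {1..k} \<times> A) \<union> {C3}"
    unfolding constrs_def types_of_tuple_def by (auto simp: image_iff)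
qed (use assms in simp)

lemma sat_constr_iff_gamma:
  fixes v :: "'a unknown \<Rightarrow> 'v::linordered_idom"
  assumes fU: "finite (unknowns A k Theta)" and "i \<in> {1..k}" and "th \<in> Theta i"
    and c: "c \<in> constrs A M k Theta"
  shows "sat_constr M Theta i th v c \<longleftrightarrow>
    (if gamma_is_eq c then lin_form (unknowns A k Theta) (gamma_coeff M Theta i th c) v = of_int (gamma_rhs c)
     else of_int (gamma_rhs c) \<le> lin_form (unknowns A k Theta) (gamma_coeff M Theta i th c) v)"
proof -
  let ?U = "unknowns A k Theta"
  have X: "XU j ` T \<subseteq> ?U" if "j \<in> {1..k}" "T \<subseteq> Theta j" for j T
    using that unfolding unknowns_def by auto
  have Y: "YU j x \<in> ?U" if "j \<in> {1..k}" "x \<in> types_of_tuple A k Theta" for j x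
    using that unfolding unknowns_def by auto
  show ?thesis
  proof (cases c)
    case (C0 j x)
    with c have "j \<in> {1..k}" "x \<in> types_of_tuple A k Theta" unfolding constrs_def by auto
    then show ?thesis unfolding C0
      by (simp add: gamma_coeff_def gamma_is_eq_def gamma_rhs_def lin_form_diff
          lin_form_indicator[OF fU Y] lin_form_x_row[OF fU X])
  next
    case (C1 j x)
    with c have "j \<in> {1..k}" "x \<in> types_of_tuple A k Theta" unfolding constrs_def by auto
    then show ?thesis unfolding C1
      by (simp add: gamma_coeff_def gamma_is_eq_def gamma_rhs_def
          lin_form_indicator[OF fU Y] lin_form_x_row[OF fU X])
  next
    case (C2 j l x)
    with c have "j \<in> {1..k}" "l \<in> {1..k}" "x \<in> types_of_tuple A k Theta" unfolding constrs_def by auto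
    then show ?thesis unfolding C2
      by (simp add: gamma_coeff_def gamma_is_eq_def gamma_rhs_def lin_form_diff lin_form_indicator[OF fU Y])
  next
    case C3
    have "XU i th \<in> ?U" using assms(2,3) unfolding unknowns_def by auto
    then show ?thesis unfolding C3
      by (simp add: gamma_coeff_def gamma_is_eq_def gamma_rhs_def lin_form_indicator[OF fU])
  qed
qed

lemma nonneg_solution_iff_nonneg_sol:
  fixes v :: "'a unknown \<Rightarrow> 'v::linordered_idom"
  assumes "finite A" and "\<forall>j\<in>{1..k}. \<forall>t\<in>Theta j. counting_type A M t"
    and "i \<in> {1..k}" and "th \<in> Theta i"
  shows "nonneg_solution A M k Theta i th v \<longleftrightarrow>
    nonneg_sol (unknowns A k Theta) (constrs A M k Theta) (gamma_coeff M Theta i th) gamma_is_eq gamma_rhs v"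
proof -
  have "(\<forall>c\<in>constrs A M k Theta. sat_constr M Theta i th v c) \<longleftrightarrow>
    (\<forall>c\<in>constrs A M k Theta. if gamma_is_eq c
        then lin_form (unknowns A k Theta) (gamma_coeff M Theta i th c) v = of_int (gamma_rhs c)
        else of_int (gamma_rhs c) \<le> lin_form (unknowns A k Theta) (gamma_coeff M Theta i th c) v)"
    by (rule ball_cong[OF refl], rule sat_constr_iff_gamma[OF finite_unknowns[OF assms(1,2)] assms(3,4)])
  then show ?thesis unfolding nonneg_solution_def nonneg_sol_def by (simp only:)
qed

lemma abs_gamma_coeff_le:
  assumes "\<forall>j\<in>{1..k}. \<forall>t\<in>Theta j. counting_type A M t" and "1 \<le> M"
    and "c \<in> constrs A M k Theta"
  shows "\<bar>gamma_coeff M Theta i th c u\<bar> \<le> int M"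
proof (cases c)
  case (C0 j x)
  with assms(3) have "j \<in> {1..k}" unfolding constrs_def by auto
  with assms(1) have "t x \<le> M" if "t \<in> Theta j" for t
    using that unfolding counting_type_def by (metis le0)
  with \<open>1 \<le> M\<close> show ?thesis unfolding C0 gamma_coeff_def x_row_def by (cases u) auto
next
  case (C1 j x)
  with \<open>1 \<le> M\<close> show ?thesis unfolding gamma_coeff_def x_row_def by (cases u) auto
qed (use \<open>1 \<le> M\<close> in \<open>auto simp: gamma_coeff_def\<close>)

lemma nonneg_solution_of_int:
  assumes "finite A" and "\<forall>j\<in>{1..k}. \<forall>t\<in>Theta j. counting_type A M t"
    and "i \<in> {1..k}" and "th \<in> Theta i"
    and "nonneg_solution A M k Theta i th (w :: 'a unknown \<Rightarrow> int)"
  shows "nonneg_solution A M k Theta i th (\<lambda>u. rat_of_int (w u))"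
  using assms(5) unfolding nonneg_solution_iff_nonneg_sol[OF assms(1-4)] nonneg_sol_of_int_iff .

lemma fact_mult_power_le:
  fixes n m M :: nat
  assumes "n \<le> m" and "1 \<le> m" and "1 \<le> M"
  shows "fact n * (m * M\<^sup>2) ^ n \<le> m * (m * M) ^ (2 * m + 1)"
proof -
  have "fact n \<le> n ^ n" using fact_le_power[of n, where 'a = nat] by simp
  also have "\<dots> \<le> m ^ n" using \<open>n \<le> m\<close> by (rule power_mono) simp
  finally have "fact n * (m * M\<^sup>2) ^ n \<le> m ^ n * (m * M\<^sup>2) ^ n" by (rule mult_right_mono) simp
  also have "\<dots> = ((m * M)\<^sup>2) ^ n" by (simp add: power_mult_distrib power2_eq_square)
  also have "\<dots> \<le> ((m * M)\<^sup>2) ^ m" using assms by (intro power_increasing) auto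
  also have "\<dots> \<le> m * (m * M) ^ (2 * m + 1)"
    using assms by (simp add: power_mult[symmetric] power_add)
  finally show ?thesis .
qed

lemma nonneg_solution_rat_imp_bounded_int:
  assumes "finite A" and ct: "\<forall>j\<in>{1..k}. \<forall>t\<in>Theta j. counting_type A M t"
    and "i \<in> {1..k}" and "th \<in> Theta i" and "1 \<le> M"
    and "nonneg_solution A M k Theta i th (v :: 'a unknown \<Rightarrow> rat)"
  defines "m \<equiv> card (constrs A M k Theta)"
  shows "\<exists>w :: 'a unknown \<Rightarrow> int. nonneg_solution A M k Theta i th w
    \<and> card {u \<in> unknowns A k Theta. w u \<noteq> 0} \<le> m
    \<and> (\<forall>u\<in>unknowns A k Theta. w u \<le> int (m * (m * M) ^ (2 * m + 1)))"
proof -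
  let ?U = "unknowns A k Theta" and ?C = "constrs A M k Theta"
  note sol_iff = nonneg_solution_iff_nonneg_sol[OF assms(1-4)]
  have "1 \<le> m" using finite_constrs[OF assms(1)] unfolding m_def
    by (simp add: Suc_le_eq card_gt_0_iff constrs_def)
  obtain w n where sol: "nonneg_sol ?U ?C (gamma_coeff M Theta i th) gamma_is_eq gamma_rhs w"
    and card_w: "card (nonzeros ?U w) \<le> n" and "n \<le> m"
    and w_le: "\<forall>u\<in>?U. \<bar>w u\<bar> \<le> fact n * (int m * (int M)\<^sup>2) ^ n"
  proof (rule exists_bounded_int_nonneg_sol[of ?U ?C gamma_is_eq gamma_rhs "int M"])
    show "finite ?U" and "finite ?C" using finite_unknowns[OF assms(1) ct] finite_constrs[OF assms(1)] .
    show "\<forall>c\<in>?C. gamma_is_eq c \<longrightarrow> gamma_rhs c = 0" and "\<forall>c\<in>?C. 0 \<le> gamma_rhs c \<and> gamma_rhs c \<le> int M"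
      using \<open>1 \<le> M\<close> by (auto simp: gamma_is_eq_def gamma_rhs_def split: constr.splits)
    show "\<forall>c\<in>?C. \<forall>u\<in>?U. \<bar>gamma_coeff M Theta i th c u\<bar> \<le> int M"
      using abs_gamma_coeff_le[OF ct \<open>1 \<le> M\<close>] by blast
    show "nonneg_sol ?U ?C (gamma_coeff M Theta i th) gamma_is_eq gamma_rhs v"
      using assms(6) unfolding sol_iff .
  qed (unfold m_def[symmetric], erule that, assumption+)
  have "fact n * (int m * (int M)\<^sup>2) ^ n = int (fact n * (m * M\<^sup>2) ^ n)" by simp
  also have "\<dots> \<le> int (m * (m * M) ^ (2 * m + 1))"
    using fact_mult_power_le[OF \<open>n \<le> m\<close> \<open>1 \<le> m\<close> \<open>1 \<le> M\<close>] by (simp only: of_nat_le_iff)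
  finally have bound: "fact n * (int m * (int M)\<^sup>2) ^ n \<le> int (m * (m * M) ^ (2 * m + 1))" .
  have "\<forall>u\<in>?U. w u \<le> int (m * (m * M) ^ (2 * m + 1))"
  proof
    fix u assume "u \<in> ?U"
    with w_le bound show "w u \<le> int (m * (m * M) ^ (2 * m + 1))"
      using abs_ge_self[of "w u"] by fastforce
  qed
  with sol card_w \<open>n \<le> m\<close> show ?thesis
    unfolding sol_iff[symmetric] nonzeros_def by (intro exI[of _ w]) auto
qed

theorem lemma4:
  fixes A :: "'a set" and len M k i :: nat
    and Theta :: "nat \<Rightarrow> ('a \<Rightarrow> nat) set" and th :: "'a \<Rightarrow> nat"
  assumes "finite A" and "A \<noteq> {}" and "len \<ge> 1"
    and "M = 3 * card A * len ^ 3"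
    and "\<forall>j\<in>{1..k}. \<forall>t\<in>Theta j. counting_type A M t"
    and "i \<in> {1..k}" and "th \<in> Theta i"
  defines "m \<equiv> card (constrs A M k Theta)"
  shows "((\<exists>v :: 'a unknown \<Rightarrow> int. nonneg_solution A M k Theta i th v)
            \<longleftrightarrow> (\<exists>v :: 'a unknown \<Rightarrow> rat. nonneg_solution A M k Theta i th v))
       \<and> ((\<exists>v :: 'a unknown \<Rightarrow> int. nonneg_solution A M k Theta i th v)
            \<longleftrightarrow> (\<exists>v :: 'a unknown \<Rightarrow> int. nonneg_solution A M k Theta i th v
                   \<and> card {u \<in> unknowns A k Theta. v u \<noteq> 0} \<le> m
                   \<and> (\<forall>u\<in>unknowns A k Theta. v u \<le> int (m * (m * M) ^ (2 * m + 1)))))"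
proof -
  have "1 \<le> M" using assms(1-4) by (simp add: Suc_le_eq card_gt_0_iff)
  note int_to_rat = nonneg_solution_of_int[OF assms(1,5-7)]
  note rat_to_int = nonneg_solution_rat_imp_bounded_int[OF assms(1,5-7) \<open>1 \<le> M\<close>, folded m_def]
  show ?thesis
  proof (intro conjI iffI)
    assume "\<exists>v :: 'a unknown \<Rightarrow> int. nonneg_solution A M k Theta i th v"
    then show "\<exists>v :: 'a unknown \<Rightarrow> rat. nonneg_solution A M k Theta i th v"
      using int_to_rat by blast
  next
    assume "\<exists>v :: 'a unknown \<Rightarrow> rat. nonneg_solution A M k Theta i th v"
    then show "\<exists>v :: 'a unknown \<Rightarrow> int. nonneg_solution A M k Theta i th v"
      using rat_to_int by blast
  next
    assume "\<exists>v :: 'a unknown \<Rightarrow> int. nonneg_solution A M k Theta i th v"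
    then show "\<exists>v :: 'a unknown \<Rightarrow> int. nonneg_solution A M k Theta i th v
        \<and> card {u \<in> unknowns A k Theta. v u \<noteq> 0} \<le> m
        \<and> (\<forall>u\<in>unknowns A k Theta. v u \<le> int (m * (m * M) ^ (2 * m + 1)))"
      using int_to_rat rat_to_int by blast
  qed blast
qed

end
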